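(* Let $a\ge b\ge2$ and $k$ be integers with $a+b+1\le k\le a+2b-1$. Then for every $(i,j)\in Q_3$ we have $w_2,w_3,w_4,w_6\in\mathcal{R}^k_{(a,b),(i,j)}$.
   Context: $\widehat{\mathfrak{su}}(3)_k$ fusion. Let $P_+^k=\{(\lambda_1,\lambda_2)\in\mathbb{Z}_{\ge0}^2:\lambda_1+\lambda_2\le k\}$. For $\lambda,\mu,\nu\in P_+^k$ set - $\mathcal{A}=\tfrac13[2(\lambda_1+\mu_1+\nu_2)+\lambda_2+\mu_2+\nu_1]$, - $\mathcal{B}=\tfrac13[\lambda_1+\mu_1+\nu_2+2(\lambda_2+\mu_2+\nu_1)]$, - $k_0^{\max}=\min(\mathcal{A},\mathcal{B})$, - $k_0^{\min}=\max(\lambda_1+\lambda_2,\mu_1+\mu_2,\nu_1+\nu_2,\mathcal{A}-\lambda_1,\mathcal{A}-\mu_1,\mathcal{A}-\nu_2,\mathcal{B}-\lambda_2,\mathcal{B}-\mu_2,\mathcal{B}-\nu_1)$. The fusion multiplicity is $N^{(k)\nu}_{\lambda,\mu}=\min(k_0^{\max},k)-k_0^{\min}+1$ if $\mathcal{A},\mathcal{B}$ are nonnegative integers, $k_0^{\max}\ge k_0^{\min}$ and $k\ge k_0^{\min}$; otherwise it is $0$. The set $\mathcal{R}^k_{\lambda,\mu}$ is $\{\nu\in P_+^k:N^{(k)\nu}_{\lambda,\mu}\ne0\}$. The candidate weights are $w_1=(a-1,b+2)$, $w_2=(a+2,b-1)$, $w_3=(a+1,b-2)$, $w_4=(a-2,b+1)$,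 $w_5=(a+1,b+1)$, $w_6=(a-1,b-1)$. The set $Q_3$ is defined by $Q_3=\{(p-2k+2a+2b,p+k-a-b):p\in\mathbb{Z},\ 2k-2a-2b\le p\le k-a-1\}$. *)

theory Defs
  imports Complex_Main
begin

type_synonym wt = "int \<times> int"

definition Pplus :: "int \<Rightarrow> wt set" where
  "Pplus k = {(l1, l2). 0 \<le> l1 \<and> 0 \<le> l2 \<and> l1 + l2 \<le> k}"

definition calA :: "wt \<Rightarrow> wt \<Rightarrow> wt \<Rightarrow> rat" where
  "calA lam mu nu = (2 * of_int (fst lam + fst mu + snd nu) + of_int (snd lam + snd mu + fst nu)) / 3"

definition calB :: "wt \<Rightarrow> wt \<Rightarrow> wt \<Rightarrow> rat" where
  "calB lam mu nu = (of_int (fst lam + fst mu + snd nu) + 2 * of_int (snd lam + snd mu + fst nu)) / 3"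

definition k0max :: "wt \<Rightarrow> wt \<Rightarrow> wt \<Rightarrow> rat" where
  "k0max lam mu nu = min (calA lam mu nu) (calB lam mu nu)"

definition k0min :: "wt \<Rightarrow> wt \<Rightarrow> wt \<Rightarrow> rat" where
  "k0min lam mu nu = (let A = calA lam mu nu; B = calB lam mu nu in
     Max {of_int (fst lam + snd lam), of_int (fst mu + snd mu), of_int (fst nu + snd nu),
          A - of_int (fst lam), A - of_int (fst mu), A - of_int (snd nu),
          B - of_int (snd lam), B - of_int (snd mu), B - of_int (fst nu)})"

definition fusion_mult :: "int \<Rightarrow> wt \<Rightarrow> wt \<Rightarrow> wt \<Rightarrow> int" where
  "fusion_mult k lam mu nu =
     (if calA lam mu nu \<in> \<int> \<and> calA lam mu nu \<ge> 0 \<and> calB lam mu nu \<in> \<int> \<and> calB lam mu nu \<ge> 0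
         \<and> k0max lam mu nu \<ge> k0min lam mu nu \<and> of_int k \<ge> k0min lam mu nu
      then \<lfloor>min (k0max lam mu nu) (of_int k) - k0min lam mu nu + 1\<rfloor>
      else 0)"

definition fusion_R :: "int \<Rightarrow> wt \<Rightarrow> wt \<Rightarrow> wt set" where
  "fusion_R k lam mu = {nu \<in> Pplus k. fusion_mult k lam mu nu \<noteq> 0}"

definition Q3 :: "int \<Rightarrow> int \<Rightarrow> int \<Rightarrow> wt set" where
  "Q3 k a b = {(p - 2*k + 2*a + 2*b, p + k - a - b) | p. 2*k - 2*a - 2*b \<le> p \<and> p \<le> k - a - 1}"

end

theory Submission
  imports Defs
begin

text \<open>For each of the four weights, \<open>\<A>\<close> and \<open>\<B>\<close> are integers determined by the parameter \<open>p\<close>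
  of the point of \<open>Q\<^sub>3\<close> (up to a shift by \<open>-1\<close>, \<open>0\<close> or \<open>1\<close>). The multiplicity is then the integer
  \<open>min(\<A>, \<B>, k) - k\<^sub>0\<^sup>m\<^sup>i\<^sup>n + 1\<close>, and the constraints on \<open>a, b, k, p\<close> are exactly what makes each of the
  nine lower bounds defining \<open>k\<^sub>0\<^sup>m\<^sup>i\<^sup>n\<close> at most \<open>min(\<A>, \<B>, k)\<close>, so it is positive.\<close>

definition k0min_int :: "wt \<Rightarrow> wt \<Rightarrow> wt \<Rightarrow> int \<Rightarrow> int \<Rightarrow> int" where
  "k0min_int lam mu nu X Y =
     Max {fst lam + snd lam, fst mu + snd mu, fst nu + snd nu,
          X - fst lam, X - fst mu, X - snd nu, Y - snd lam, Y - snd mu, Y - fst nu}"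

lemma k0min_of_int:
  assumes "calA lam mu nu = of_int X" and "calB lam mu nu = of_int Y"
  shows "k0min lam mu nu = of_int (k0min_int lam mu nu X Y)"
  unfolding k0min_def k0min_int_def Let_def assms
  by (subst mono_Max_commute[where f = "of_int :: int \<Rightarrow> rat"])
    (simp_all only: mono_def of_int_le_iff image_insert image_empty of_int_add of_int_diff
       finite.intros insert_not_empty simp_thms)

lemma k0min_int_le_iff:
  "k0min_int lam mu nu X Y \<le> M \<longleftrightarrow>
     fst lam + snd lam \<le> M \<and> fst mu + snd mu \<le> M \<and> fst nu + snd nu \<le> M \<and>
     X - fst lam \<le> M \<and> X - fst mu \<le> M \<and> X - snd nu \<le> M \<and>
     Y - snd lam \<le> M \<and> Y - snd mu \<le> M \<and> Y - fst nu \<le> M"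
  unfolding k0min_int_def
  by (simp only: Max_le_iff finite.intros insert_not_empty ball_simps simp_thms)

lemma fusion_mult_of_int:
  fixes X Y k :: int
  assumes A: "calA lam mu nu = of_int X" and B: "calB lam mu nu = of_int Y"
    and "0 \<le> X" "0 \<le> Y" and "k0min_int lam mu nu X Y \<le> min (min X Y) k"
  shows "fusion_mult k lam mu nu = min (min X Y) k - k0min_int lam mu nu X Y + 1"
proof -
  have "k0max lam mu nu = of_int (min X Y)"
    unfolding k0max_def A B by simp
  then show ?thesis
    using assms unfolding fusion_mult_def k0min_of_int[OF A B] A B
    by (simp flip: of_int_min of_int_diff of_int_add)
qed

lemma mem_fusion_R:
  fixes X Y k :: int
  assumes "calA lam mu nu = of_int X" and "calB lam mu nu = of_int Y"
    and "0 \<le> X" "0 \<le> Y" and "k0min_int lam mu nu X Y \<le> min (min X Y) k"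
    and "nu \<in> Pplus k"
  shows "nu \<in> fusion_R k lam mu"
  using assms fusion_mult_of_int[OF assms(1-5)] unfolding fusion_R_def by auto

theorem mainTheorem11:
  fixes a b k :: int
  assumes "a \<ge> b" and "b \<ge> 2" and "a + b + 1 \<le> k" and "k \<le> a + 2*b - 1"
  shows "\<forall>(i, j) \<in> Q3 k a b.
           (a + 2, b - 1) \<in> fusion_R k (a, b) (i, j) \<and>
           (a + 1, b - 2) \<in> fusion_R k (a, b) (i, j) \<and>
           (a - 2, b + 1) \<in> fusion_R k (a, b) (i, j) \<and>
           (a - 1, b - 1) \<in> fusion_R k (a, b) (i, j)"
proof (intro ballI, clarify)
  fix i j assume "(i, j) \<in> Q3 k a b"
  then obtain p where p: "2*k - 2*a - 2*b \<le> p" "p \<le> k - a - 1"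
    and ij: "i = p - 2*k + 2*a + 2*b" "j = p + k - a - b"
    unfolding Q3_def by auto
  let ?X = "2*a + 2*b - k + p" and ?Y = "a + b + p"
  have "(a + 2, b - 1) \<in> fusion_R k (a, b) (i, j)"
    by (rule mem_fusion_R[where X = ?X and Y = "?Y + 1"])
      (unfold k0min_int_le_iff Pplus_def,
       use assms p in \<open>auto simp: calA_def calB_def ij field_simps\<close>)
  moreover have "(a + 1, b - 2) \<in> fusion_R k (a, b) (i, j)"
    by (rule mem_fusion_R[where X = "?X - 1" and Y = ?Y])
      (unfold k0min_int_le_iff Pplus_def,
       use assms p in \<open>auto simp: calA_def calB_def ij field_simps\<close>)
  moreover have "(a - 2, b + 1) \<in> fusion_R k (a, b) (i, j)"
    by (rule mem_fusion_R[where X = ?X and Y = "?Y - 1"])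
      (unfold k0min_int_le_iff Pplus_def,
       use assms p in \<open>auto simp: calA_def calB_def ij field_simps\<close>)
  moreover have "(a - 1, b - 1) \<in> fusion_R k (a, b) (i, j)"
    by (rule mem_fusion_R[where X = "?X - 1" and Y = "?Y - 1"])
      (unfold k0min_int_le_iff Pplus_def,
       use assms p in \<open>auto simp: calA_def calB_def ij field_simps\<close>)
  ultimately show "(a + 2, b - 1) \<in> fusion_R k (a, b) (i, j) \<and>
        (a + 1, b - 2) \<in> fusion_R k (a, b) (i, j) \<and>
        (a - 2, b + 1) \<in> fusion_R k (a, b) (i, j) \<and>
        (a - 1, b - 1) \<in> fusion_R k (a, b) (i, j)" by blast
qed

end
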